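(* Let $u=(p,q)$ and $v=(r,s)$ be primitive vectors in $\mathbb{Z}^2$ with $\det(u,v)=ps-qr=n\ge 2$, let $d_\pm=\gcd(u\pm v)$ (the gcd of the coordinates of $u\pm v$), and let $a$ be the unique integer with $0\le a<n$ such that $Mu=(1,0)$ and $Mv=(a,n)$ for some $M\in\mathrm{SL}_2(\mathbb{Z})$. Then the following are equivalent: (i) $\max\{d_+,d_-\}=n$ and $\min\{d_+,d_-\}\in\{1,2\}$; (ii) $a\equiv\pm1\pmod n$; (iii) $u\equiv\pm v\pmod n$ (componentwise congruence). In this case the non-maximal thread degree $\min\{d_+,d_-\}$ equals $\gcd(n,2)$; in particular it equals $1$ if $n$ is odd and $2$ if $n$ is even.
   Context: A vector $(x,y)\in\mathbb{Z}^2$ is primitive if $\gcd(x,y)=1$. For such $u,v$ with $\det(u,v)=n\ge2$ there is $M\in\mathrm{SL}_2(\mathbb{Z})$ with $Mu=(1,0)$, $Mv=(a,n)$, $0\le a<n$, $\gcd(a,n)=1$, and $a$ is determined uniquely by these conditions. *)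

theory Defs
  imports Main "HOL-Number_Theory.Cong"
begin

text \<open>SL_2(Z) matrices are represented by their entries (m11, m12, m21, m22)
  with determinant 1; the matrix acts on column vectors (x, y).\<close>

definition sl2z_maps :: "int \<Rightarrow> int \<Rightarrow> int \<Rightarrow> int \<Rightarrow> int \<times> int \<Rightarrow> int \<times> int \<Rightarrow> bool" where
  "sl2z_maps m11 m12 m21 m22 w w' \<longleftrightarrow>
     (m11 * fst w + m12 * snd w, m21 * fst w + m22 * snd w) = w'"

definition is_sl2z :: "int \<Rightarrow> int \<Rightarrow> int \<Rightarrow> int \<Rightarrow> bool" where
  "is_sl2z m11 m12 m21 m22 \<longleftrightarrow> m11 * m22 - m12 * m21 = 1"

definition det2 :: "int \<times> int \<Rightarrow> int \<times> int \<Rightarrow> int" where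
  "det2 u v = fst u * snd v - snd u * fst v"

definition primitive :: "int \<times> int \<Rightarrow> bool" where
  "primitive u \<longleftrightarrow> gcd (fst u) (snd u) = 1"

definition vgcd :: "int \<times> int \<Rightarrow> int" where
  "vgcd u = gcd (fst u) (snd u)"

definition normal_a :: "int \<times> int \<Rightarrow> int \<times> int \<Rightarrow> int" where
  "normal_a u v = (THE a. 0 \<le> a \<and> a < det2 u v \<and>
     (\<exists>m11 m12 m21 m22. is_sl2z m11 m12 m21 m22 \<and>
        sl2z_maps m11 m12 m21 m22 u (1, 0) \<and>
        sl2z_maps m11 m12 m21 m22 v (a, det2 u v)))"

end

theory Submission
  imports Defs
begin

text \<open>Matrices in SL_2(Z) preserve the gcd of the coordinates of a vector. A normalizing
  matrix M sends u + t v to (1 + t a, t n), hence d_+ = gcd (a + 1) n and d_- = gcd (a - 1) n.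
  Moreover n divides both coordinates of u - v (resp. u + v) iff n divides d_- (resp. d_+), i.e.
  iff a is congruent to 1 (resp. -1). If a is congruent to 1 then d_- = n and d_+ = gcd 2 n, and
  symmetrically for -1; conversely d_+ = n or d_- = n forces a to be congruent to -1 or 1.\<close>

lemma sl2z_maps_inverse:
  assumes "is_sl2z m11 m12 m21 m22" and "sl2z_maps m11 m12 m21 m22 w w'"
  shows "sl2z_maps m22 (- m12) (- m21) m11 w' w"
proof -
  have "m22 * fst w' - m12 * snd w' = (m11 * m22 - m12 * m21) * fst w"
    and "m11 * snd w' - m21 * fst w' = (m11 * m22 - m12 * m21) * snd w"
    using assms(2) unfolding sl2z_maps_def by (auto simp: algebra_simps)
  with assms(1) show ?thesis
    unfolding is_sl2z_def sl2z_maps_def by (simp add: prod_eq_iff)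
qed

lemma vgcd_dvd_vgcd_image:
  assumes "sl2z_maps m11 m12 m21 m22 w w'"
  shows "vgcd w dvd vgcd w'"
  using assms unfolding sl2z_maps_def vgcd_def by auto

lemma vgcd_sl2z_image:
  assumes "is_sl2z m11 m12 m21 m22" and "sl2z_maps m11 m12 m21 m22 w w'"
  shows "vgcd w' = vgcd w"
  using vgcd_dvd_vgcd_image[OF assms(2)] vgcd_dvd_vgcd_image[OF sl2z_maps_inverse[OF assms]]
  by (simp add: vgcd_def zdvd_antisym_nonneg)

lemma sl2z_maps_add_mult:
  assumes "sl2z_maps m11 m12 m21 m22 (p, q) (x, y)" and "sl2z_maps m11 m12 m21 m22 (r, s) (x', y')"
  shows "sl2z_maps m11 m12 m21 m22 (p + t * r, q + t * s) (x + t * x', y + t * y')"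
  using assms unfolding sl2z_maps_def by (auto simp: algebra_simps)

lemma vgcd_add_mult_normal_form:
  assumes "is_sl2z m11 m12 m21 m22"
    and "sl2z_maps m11 m12 m21 m22 (p, q) (1, 0)" and "sl2z_maps m11 m12 m21 m22 (r, s) (a, n)"
  shows "vgcd (p + t * r, q + t * s) = gcd (1 + t * a) n"
proof -
  have "vgcd (p + t * r, q + t * s) = gcd (1 + t * a) (t * n)"
    using vgcd_sl2z_image[OF assms(1) sl2z_maps_add_mult[OF assms(2,3)]] by (simp add: vgcd_def)
  moreover have "coprime (1 + t * a) t"
    by (rule coprimeI) (metis add_diff_cancel_right' dvd_diff dvd_mult2 dvd_refl)
  ultimately show ?thesis by (simp add: gcd_mult_right_left_cancel)
qed

lemma sl2z_normal_form_exists: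
  assumes "primitive u" and "det2 u v > 0"
  obtains m11 m12 m21 m22 a where "is_sl2z m11 m12 m21 m22"
    and "sl2z_maps m11 m12 m21 m22 u (1, 0)" and "sl2z_maps m11 m12 m21 m22 v (a, det2 u v)"
    and "0 \<le> a" and "a < det2 u v"
proof -
  obtain p q r s where uv: "u = (p, q)" "v = (r, s)" by fastforce
  define n where "n = det2 u v"
  have n: "n = p * s - q * r" unfolding n_def uv det2_def by simp
  obtain x y where bezout: "x * p + y * q = 1"
    using bezout_int[of p q] assms(1) unfolding primitive_def uv by auto
  define b where "b = x * r + y * s"
  define k where "k = b div n"
  \<comment> \<open>The matrix with rows (x, y), (-q, p) sends u to (1, 0) and v to (b, n); composing it
    with a shear reduces b modulo n.\<close>
  have "b - k * n = b mod n" unfolding k_def by (simp add: minus_div_mult_eq_mod)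
  moreover have "(x + k * q) * r + (y - k * p) * s = b - k * n"
    unfolding b_def n by (simp add: algebra_simps)
  ultimately have "sl2z_maps (x + k * q) (y - k * p) (- q) p v (b mod n, n)"
    unfolding sl2z_maps_def uv n by (simp add: algebra_simps)
  moreover have "is_sl2z (x + k * q) (y - k * p) (- q) p"
    and "sl2z_maps (x + k * q) (y - k * p) (- q) p u (1, 0)"
    using bezout unfolding is_sl2z_def sl2z_maps_def uv by (simp_all add: algebra_simps)
  moreover have "0 \<le> b mod n" and "b mod n < n" using assms(2) unfolding n_def by simp_all
  ultimately show ?thesis using that unfolding n_def by blast
qed

lemma sl2z_normal_form_preimage:
  assumes "is_sl2z m11 m12 m21 m22"
    and "sl2z_maps m11 m12 m21 m22 u (1, 0)" and "sl2z_maps m11 m12 m21 m22 v (a, n)"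
  shows "v = (a * fst u - n * m12, a * snd u + n * m11)"
  using sl2z_maps_inverse[OF assms(1,2)] sl2z_maps_inverse[OF assms(1,3)]
  unfolding sl2z_maps_def by (auto simp: algebra_simps)

lemma sl2z_normal_form_unique_mod:
  assumes "primitive u"
    and "is_sl2z m11 m12 m21 m22"
    and "sl2z_maps m11 m12 m21 m22 u (1, 0)" and "sl2z_maps m11 m12 m21 m22 v (a, n)"
    and "is_sl2z m11' m12' m21' m22'"
    and "sl2z_maps m11' m12' m21' m22' u (1, 0)" and "sl2z_maps m11' m12' m21' m22' v (a', n)"
  shows "[a = a'] (mod n)"
proof -
  have v: "v = (a * fst u - n * m12, a * snd u + n * m11)"
    and v': "v = (a' * fst u - n * m12', a' * snd u + n * m11')"
    using sl2z_normal_form_preimage assms by blast+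
  have "(a - a') * fst u = n * (m12 - m12')" and "(a - a') * snd u = n * (m11' - m11)"
    using arg_cong[OF trans[OF v[symmetric] v'], of fst] arg_cong[OF trans[OF v[symmetric] v'], of snd]
    by (simp_all add: algebra_simps)
  then have "n dvd gcd ((a - a') * fst u) ((a - a') * snd u)" by simp
  also have "\<dots> = \<bar>a - a'\<bar>"
    using assms(1) by (simp add: primitive_def flip: gcd_mult_distrib_int)
  finally show ?thesis by (simp add: cong_iff_dvd_diff)
qed

lemma normal_a_eqI:
  assumes "primitive u" and "is_sl2z m11 m12 m21 m22"
    and "sl2z_maps m11 m12 m21 m22 u (1, 0)" and "sl2z_maps m11 m12 m21 m22 v (a, det2 u v)"
    and "0 \<le> a" and "a < det2 u v"
  shows "normal_a u v = a"
  unfolding normal_a_def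
proof (rule the_equality)
  show "0 \<le> a \<and> a < det2 u v \<and> (\<exists>m11 m12 m21 m22. is_sl2z m11 m12 m21 m22 \<and>
      sl2z_maps m11 m12 m21 m22 u (1, 0) \<and> sl2z_maps m11 m12 m21 m22 v (a, det2 u v))"
    using assms(2-) by blast
next
  fix a'
  assume "0 \<le> a' \<and> a' < det2 u v \<and> (\<exists>m11 m12 m21 m22. is_sl2z m11 m12 m21 m22 \<and>
      sl2z_maps m11 m12 m21 m22 u (1, 0) \<and> sl2z_maps m11 m12 m21 m22 v (a', det2 u v))"
  then show "a' = a"
    using sl2z_normal_form_unique_mod[OF assms(1-4)] assms(5,6)
    by (metis cong_less_imp_eq_int)
qed

lemma gcd_succ_pred_of_cong_pm_one:
  fixes a n :: int
  assumes "n > 0" and "[a = 1] (mod n) \<or> [a = - 1] (mod n)"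
  shows "{gcd (a + 1) n, gcd (a - 1) n} = {n, gcd n 2}"
  using assms(2)
proof
  assume "[a = 1] (mod n)"
  then have "[a + 1 = 2] (mod n)" and "[a - 1 = 0] (mod n)"
    by (simp_all add: cong_iff_dvd_diff algebra_simps)
  then have "gcd (a + 1) n = gcd 2 n" and "gcd (a - 1) n = gcd 0 n"
    by (simp_all only: cong_gcd_eq)
  with assms(1) show ?thesis by (auto simp: gcd.commute)
next
  assume "[a = - 1] (mod n)"
  then have "[a + 1 = 0] (mod n)" and "[a - 1 = - 2] (mod n)"
    by (simp_all add: cong_iff_dvd_diff algebra_simps)
  then have "gcd (a + 1) n = gcd 0 n" and "gcd (a - 1) n = gcd (- 2) n"
    by (simp_all only: cong_gcd_eq)
  with assms(1) show ?thesis by (auto simp: gcd.commute)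
qed

lemma gcd_succ_pred_max_min:
  fixes a n :: int
  assumes "n > 0"
  defines "dp \<equiv> gcd (a + 1) n" and "dm \<equiv> gcd (a - 1) n"
  shows "(max dp dm = n \<and> min dp dm \<in> {1, 2}) \<longleftrightarrow> ([a = 1] (mod n) \<or> [a = - 1] (mod n))"
    and "[a = 1] (mod n) \<or> [a = - 1] (mod n) \<Longrightarrow> min dp dm = gcd n 2"
proof -
  have two: "gcd n 2 \<in> {1, 2}" by (cases "even n") simp_all
  have "gcd n 2 \<le> n" using assms(1) by (simp add: zdvd_imp_le)
  then show min: "min dp dm = gcd n 2" if "[a = 1] (mod n) \<or> [a = - 1] (mod n)"
    using gcd_succ_pred_of_cong_pm_one[OF assms(1) that] unfolding dp_def dm_def
    by (auto simp: doubleton_eq_iff)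
  show "(max dp dm = n \<and> min dp dm \<in> {1, 2}) \<longleftrightarrow> ([a = 1] (mod n) \<or> [a = - 1] (mod n))"
  proof
    assume "max dp dm = n \<and> min dp dm \<in> {1, 2}"
    then have "n dvd a + 1 \<or> n dvd a - 1"
      unfolding dp_def dm_def by (metis gcd_dvd1 max_def)
    then show "[a = 1] (mod n) \<or> [a = - 1] (mod n)" by (auto simp: cong_iff_dvd_diff)
  next
    assume cong: "[a = 1] (mod n) \<or> [a = - 1] (mod n)"
    then show "max dp dm = n \<and> min dp dm \<in> {1, 2}"
      using gcd_succ_pred_of_cong_pm_one[OF assms(1) cong] min two \<open>gcd n 2 \<le> n\<close>
      unfolding dp_def dm_def by (auto simp: doubleton_eq_iff)
  qed
qed

lemma cong_pair_iff_dvd_vgcd: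
  "([p = r] (mod n) \<and> [q = s] (mod n)) \<longleftrightarrow> n dvd vgcd (p - r, q - s)"
  by (simp add: vgcd_def cong_iff_dvd_diff)

theorem mainTheorem3:
  fixes p q r s :: int
  defines "u \<equiv> (p, q)" and "v \<equiv> (r, s)"
  defines "n \<equiv> det2 u v"
  defines "dp \<equiv> vgcd (p + r, q + s)" and "dm \<equiv> vgcd (p - r, q - s)"
  defines "a \<equiv> normal_a u v"
  assumes "primitive u" and "primitive v" and "n \<ge> 2"
  shows "((max dp dm = n \<and> min dp dm \<in> {1, 2}) \<longleftrightarrow>
            ([a = 1] (mod n) \<or> [a = -1] (mod n)))
       \<and> (([a = 1] (mod n) \<or> [a = -1] (mod n)) \<longleftrightarrow>
            (([p = r] (mod n) \<and> [q = s] (mod n)) \<or>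
             ([p = - r] (mod n) \<and> [q = - s] (mod n))))
       \<and> ((max dp dm = n \<and> min dp dm \<in> {1, 2}) \<longrightarrow>
            min dp dm = gcd n 2 \<and>
            (odd n \<longrightarrow> min dp dm = 1) \<and> (even n \<longrightarrow> min dp dm = 2))"
proof -
  have "n > 0" using \<open>n \<ge> 2\<close> by simp
  then obtain m11 m12 m21 m22 a' where M: "is_sl2z m11 m12 m21 m22"
    "sl2z_maps m11 m12 m21 m22 u (1, 0)" "sl2z_maps m11 m12 m21 m22 v (a', n)"
    and a'_bounds: "0 \<le> a'" "a' < n"
    using sl2z_normal_form_exists[OF \<open>primitive u\<close>] unfolding n_def by blast
  moreover have "a = a'"
    unfolding a_def using normal_a_eqI[OF \<open>primitive u\<close> M[unfolded n_def]] a'_bounds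
    by (simp add: n_def)
  ultimately have normal_form: "is_sl2z m11 m12 m21 m22"
    "sl2z_maps m11 m12 m21 m22 (p, q) (1, 0)" "sl2z_maps m11 m12 m21 m22 (r, s) (a, n)"
    unfolding u_def v_def by simp_all
  have dp: "dp = gcd (a + 1) n"
    using vgcd_add_mult_normal_form[OF normal_form, of 1] unfolding dp_def by (simp add: add.commute)
  have dm: "dm = gcd (a - 1) n"
    using vgcd_add_mult_normal_form[OF normal_form, of "- 1"] unfolding dm_def
    by (metis gcd_neg1_int minus_diff_eq diff_conv_add_uminus mult_minus1)
  have "([p = r] (mod n) \<and> [q = s] (mod n)) \<longleftrightarrow> [a = 1] (mod n)"
    using cong_pair_iff_dvd_vgcd[of p r n q s] dm unfolding dm_def
    by (simp add: cong_iff_dvd_diff)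
  moreover have "([p = - r] (mod n) \<and> [q = - s] (mod n)) \<longleftrightarrow> [a = - 1] (mod n)"
    using cong_pair_iff_dvd_vgcd[of p "- r" n q "- s"] dp unfolding dp_def
    by (simp add: cong_iff_dvd_diff)
  ultimately show ?thesis
    using gcd_succ_pred_max_min[OF \<open>n > 0\<close>, of a] unfolding dp dm by auto
qed

end
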